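(* Let $F_{\mathcal P}$ be a function determined by Algorithm 1 for a path $\mathcal P$, where the arbitrary phases assigned to class representatives are chosen so that $F_{\mathcal P}(\vec i)=\overline{F_{\mathcal P}(\vec i\oplus\vec\alpha^{\mathcal P})}$ for every class representative $\vec i$. Then $F_{\mathcal P}(\vec i\oplus\vec\alpha^{\mathcal P})=\overline{F_{\mathcal P}(\vec i)}$ for every configuration $\vec i$ on $\mathrm{Conn}(\mathcal P)$.
   Context: Let $\Lambda$ be a hexagonal (honeycomb) lattice embedded in a closed orientable surface, with one qubit on each edge. For an edge $j$, $\sigma^x_j,\sigma^z_j$ denote the Pauli operators on qubit $j$ and $n^{\pm}_j=\tfrac12(1\pm\sigma^z_j)$. A (string) configuration $\vec i$ is a computational basis state, viewed as a bit string assigning $0$ (empty) or $1$ (occupied) to each edge; $\vec i\oplus\vec\alpha$ is bitwise addition mod 2. For a hexagonal plaquette $p$, label its boundary edges $1,\dots,6$ cyclically (index $0$ means $6$) and its outgoing edges so that edge $12$ meets edges $6,1$; edge $7$ meets $1,2$; edge $8$ meets $2,3$; edge $9$ meets $3,4$; edge $10$ meets $4,5$; edge $11$ meets $5,6$. Define $B_p=\Big(\prod_{j=1}^6\sigma^x_j\Big)\Big(\prod_{j=1}^6(-1)^{n^-_{j-1}n^+_j}\Big)\,i^{n^-_{12}(n^-_1n^-_6-n^+_1n^+_6)}\,i^{n^-_7(n^+_1n^+_2-n^-_1n^-_2)}\,i^{n^+_8(n^-_2n^+_3-n^+_2n^-_3)}\,i^{n^-_9(n^-_3n^-_4-n^+_3n^+_4)}\,i^{n^-_{10}(n^+_4n^+_5-n^-_4n^-_5)}\,i^{n^+_{11}(n^-_5n^+_6-n^+_5n^-_6)}$;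 all $B_p$ commute pairwise and square to the identity. Write $B_p=\prod_{j\in\partial p}\sigma^x_j\sum_{\vec i}b_p(\vec i)|\vec i\rangle\langle\vec i|$, defining the phase $b_p(\vec i)$. Let $\vec\alpha^p$ be the configuration occupied exactly on the boundary edges of $p$. A path $\mathcal P$ is a sequence of edges forming a walk; $\vec\alpha^{\mathcal P}$ is the mod-2 sum of the indicators of its edges. $\mathrm{Conn}(\mathcal P)$ is the set of edges of $\mathcal P$ together with all edges sharing a vertex with an edge of $\mathcal P$; $\mathcal B_{\mathcal P}$ is the set of plaquettes with at least one boundary edge in $\mathrm{Conn}(\mathcal P)$. Define $\theta_{\mathcal P}(\vec i,p_1,\dots,p_m)=\prod_{k=1}^m \frac{b_{p_k}(\vec i\oplus\vec\alpha^{\mathcal P}\oplus\bigoplus_{j<k}\vec\alpha^{p_j})}{b_{p_k}(\vec i\oplus\bigoplus_{j<k}\vec\alpha^{p_j})}$ (a configuration on $\mathrm{Conn}(\mathcal P)$ being extended arbitrarily to the whole lattice). The configuration class of $\vec i$ on $\mathrm{Conn}(\mathcal P)$ is $\mathcal C_{\mathcal P}(\vec i)=\{\vec i\oplus\bigoplus_{p\in S}\vec\alpha^p|_{\mathrm{Conn}(\mathcal P)}:S\subseteq\mathcal B_{\mathcal P}\}$. Algorithm 1: for each configuration class pick a representative $\vec i$, set $F_{\mathcal P}(\vec i)$ to an arbitrary unit complex number, and for every subset $\{p_1,\dots,p_m\}\subseteq\mathcal B_{\mathcal P}$ set $F_{\mathcal P}(\vec i\oplus\bigoplus_k\vec\alpha^{p_k})=\theta_{\mathcal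 P}(\vec i,p_1,\dots,p_m)F_{\mathcal P}(\vec i)$. *)

theory Defs
  imports Complex_Main
begin

text \<open>Configurations are sets of occupied edges; bitwise addition mod 2 is symmetric difference.\<close>

definition cfg_xor :: "'e set \<Rightarrow> 'e set \<Rightarrow> 'e set" where
  "cfg_xor A B = (A - B) \<union> (B - A)"

definition cfg_sum :: "'e set list \<Rightarrow> 'e set" where
  "cfg_sum xs = foldr cfg_xor xs {}"

text \<open>Cyclic predecessor on boundary labels 1..6 (index 0 means 6).\<close>
definition prv :: "nat \<Rightarrow> nat" where
  "prv k = (if k = 1 then 6 else k - 1)"

text \<open>Combinatorial honeycomb lattice embedded in a closed orientable surface.
  ends e: the two endpoints of edge e; Pl: the plaquettes; lab p k: the edge of p with label k
  (1..6 boundary edges in cyclic order, 7..12 outgoing edges).  crn p k is the corner of p shared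
  by boundary edges k and k+1 (mod 6); outgoing edge 6+k meets edges k and k+1 there.
  Every vertex has degree 3, every edge lies on the boundary of exactly two plaquettes, and the
  cyclic orderings of the plaquettes are consistently oriented (each edge is traversed in opposite
  directions by its two plaquettes).\<close>
definition honeycomb_surface ::
  "('e \<Rightarrow> 'v set) \<Rightarrow> 'f set \<Rightarrow> ('f \<Rightarrow> nat \<Rightarrow> 'e) \<Rightarrow> bool" where
  "honeycomb_surface ends Pl lab \<longleftrightarrow>
     finite (UNIV :: 'e set) \<and> finite Pl \<and> Pl \<noteq> {} \<and>
     (\<forall>e. card (ends e) = 2) \<and>
     (\<forall>v \<in> (\<Union>e. ends e). card {e. v \<in> ends e} = 3) \<and>
     (\<forall>e. card {(p, k). p \<in> Pl \<and> k \<in> {1..6} \<and> lab p k = e} = 2) \<and>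
     (\<exists>crn :: 'f \<Rightarrow> nat \<Rightarrow> 'v.
        (\<forall>p \<in> Pl. inj_on (lab p) {1..12} \<and> inj_on (crn p) {1..6} \<and>
           (\<forall>k \<in> {1..6}. ends (lab p k) = {crn p (prv k), crn p k} \<and>
                           crn p k \<in> ends (lab p (k + 6)))) \<and>
        (\<forall>p \<in> Pl. \<forall>q \<in> Pl. \<forall>k \<in> {1..6}. \<forall>l \<in> {1..6}.
           lab p k = lab q l \<and> (p, k) \<noteq> (q, l) \<longrightarrow>
             crn p k = crn q (prv l) \<and> crn p (prv k) = crn q l))"

text \<open>The phase b_p(i) of the plaquette operator B_p (n^- = occupied, n^+ = empty).\<close>
definition bphase :: "('f \<Rightarrow> nat \<Rightarrow> 'e) \<Rightarrow> 'f \<Rightarrow> 'e set \<Rightarrow> complex" where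
  "bphase lab p x =
    (let nm = (\<lambda>k. if lab p k \<in> x then 1 else 0 :: int);
         np = (\<lambda>k. 1 - nm k)
     in (\<Prod>j\<in>{1..6::nat}. (-1) ^ nat (nm (prv j) * np j)) *
        \<i> powi (nm 12 * (nm 1 * nm 6 - np 1 * np 6)) *
        \<i> powi (nm 7 * (np 1 * np 2 - nm 1 * nm 2)) *
        \<i> powi (np 8 * (nm 2 * np 3 - np 2 * nm 3)) *
        \<i> powi (nm 9 * (nm 3 * nm 4 - np 3 * np 4)) *
        \<i> powi (nm 10 * (np 4 * np 5 - nm 4 * nm 5)) *
        \<i> powi (np 11 * (nm 5 * np 6 - np 5 * nm 6)))"

definition plaq_cfg :: "('f \<Rightarrow> nat \<Rightarrow> 'e) \<Rightarrow> 'f \<Rightarrow> 'e set" where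
  "plaq_cfg lab p = lab p ` {1..6}"

text \<open>B_p B_q = B_q B_p and B_p^2 = 1, expressed on the phases.\<close>
definition plaquettes_commute_square :: "'f set \<Rightarrow> ('f \<Rightarrow> nat \<Rightarrow> 'e) \<Rightarrow> bool" where
  "plaquettes_commute_square Pl lab \<longleftrightarrow>
    (\<forall>p \<in> Pl. \<forall>q \<in> Pl. \<forall>x.
       bphase lab p (cfg_xor x (plaq_cfg lab q)) * bphase lab q x =
       bphase lab q (cfg_xor x (plaq_cfg lab p)) * bphase lab p x) \<and>
    (\<forall>p \<in> Pl. \<forall>x. bphase lab p (cfg_xor x (plaq_cfg lab p)) * bphase lab p x = 1)"

definition is_path :: "('e \<Rightarrow> 'v set) \<Rightarrow> 'e list \<Rightarrow> bool" where
  "is_path ends P \<longleftrightarrow> P \<noteq> [] \<and>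
     (\<exists>vs. length vs = Suc (length P) \<and>
        (\<forall>k < length P. ends (P ! k) = {vs ! k, vs ! Suc k}))"

definition path_cfg :: "'e list \<Rightarrow> 'e set" where
  "path_cfg P = {e. odd (count_list P e)}"

definition Conn :: "('e \<Rightarrow> 'v set) \<Rightarrow> 'e list \<Rightarrow> 'e set" where
  "Conn ends P = set P \<union> {e. \<exists>f \<in> set P. ends e \<inter> ends f \<noteq> {}}"

definition BP :: "('e \<Rightarrow> 'v set) \<Rightarrow> 'f set \<Rightarrow> ('f \<Rightarrow> nat \<Rightarrow> 'e) \<Rightarrow> 'e list \<Rightarrow> 'f set" where
  "BP ends Pl lab P = {p \<in> Pl. plaq_cfg lab p \<inter> Conn ends P \<noteq> {}}"

text \<open>theta_P(i, p_1..p_m); a configuration on Conn(P) is extended by zeros to the whole lattice.\<close>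
definition theta :: "('f \<Rightarrow> nat \<Rightarrow> 'e) \<Rightarrow> 'e list \<Rightarrow> 'e set \<Rightarrow> 'f list \<Rightarrow> complex" where
  "theta lab P x ps =
     (\<Prod>k < length ps.
        bphase lab (ps ! k) (cfg_xor (cfg_xor x (path_cfg P)) (cfg_sum (map (plaq_cfg lab) (take k ps)))) /
        bphase lab (ps ! k) (cfg_xor x (cfg_sum (map (plaq_cfg lab) (take k ps)))))"

definition restr_sum :: "('e \<Rightarrow> 'v set) \<Rightarrow> ('f \<Rightarrow> nat \<Rightarrow> 'e) \<Rightarrow> 'e list \<Rightarrow> 'f list \<Rightarrow> 'e set" where
  "restr_sum ends lab P ps = cfg_sum (map (\<lambda>p. plaq_cfg lab p \<inter> Conn ends P) ps)"

definition config_class ::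
  "('e \<Rightarrow> 'v set) \<Rightarrow> 'f set \<Rightarrow> ('f \<Rightarrow> nat \<Rightarrow> 'e) \<Rightarrow> 'e list \<Rightarrow> 'e set \<Rightarrow> 'e set set" where
  "config_class ends Pl lab P x =
     {cfg_xor x (restr_sum ends lab P ps) | ps. distinct ps \<and> set ps \<subseteq> BP ends Pl lab P}"

text \<open>F is determined by Algorithm 1 with representative choice rep (rep x is the chosen
  representative of the class of x).\<close>
definition algorithm1 ::
  "('e \<Rightarrow> 'v set) \<Rightarrow> 'f set \<Rightarrow> ('f \<Rightarrow> nat \<Rightarrow> 'e) \<Rightarrow> 'e list \<Rightarrow>
   ('e set \<Rightarrow> 'e set) \<Rightarrow> ('e set \<Rightarrow> complex) \<Rightarrow> bool" where
  "algorithm1 ends Pl lab P rep F \<longleftrightarrow>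
     (\<forall>x. x \<subseteq> Conn ends P \<longrightarrow>
        rep x \<in> config_class ends Pl lab P x \<and>
        (\<forall>y \<in> config_class ends Pl lab P x. rep y = rep x) \<and>
        cmod (F (rep x)) = 1 \<and>
        (\<forall>ps. distinct ps \<and> set ps \<subseteq> BP ends Pl lab P \<longrightarrow>
           F (cfg_xor (rep x) (restr_sum ends lab P ps)) = theta lab P (rep x) ps * F (rep x)))"

end

(*
  Write theta_P(i, p_1 ... p_m) as Phi(i + alpha^P) / Phi(i), where Phi(i) is the unimodular phase
  that |i> acquires under B_{p_1}, ..., B_{p_m} applied in turn.  Since the B_p commute and square
  to 1, Phi depends only on the plaquettes used an odd number of times; and since every factor of
  b_p only involves edges meeting at one vertex, theta does not see changes of the configuration
  outside Conn(P).  Now let i = r + sum_{ps} alpha^p (sums mod 2) with r a representative, and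
  r + alpha^P = r' + sum_{qs} alpha^p with r' a representative.  Then i + alpha^P is
  r' + sum over the symmetric difference of qs and ps, so
  F(i + alpha^P) = theta(r', qs) theta(r + alpha^P, ps) F(r') = F(r + alpha^P) conj(theta(r, ps)),
  and the hypothesis on the representatives turns the right-hand side into conj(F(i)).
*)
theory Submission
  imports Defs "HOL-Library.Multiset"
begin

lemma cfg_xor_iff [simp]: "e \<in> cfg_xor A B \<longleftrightarrow> (e \<in> A) \<noteq> (e \<in> B)"
  by (auto simp: cfg_xor_def)

lemma cfg_xor_empty [simp]: "cfg_xor A {} = A"
  by auto

lemma cfg_xor_cancel [simp]: "cfg_xor (cfg_xor A B) B = A"
  by auto

lemma cfg_xor_assoc: "cfg_xor (cfg_xor A B) C = cfg_xor A (cfg_xor B C)"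
  by auto

lemma cfg_xor_right_commute: "cfg_xor (cfg_xor A B) C = cfg_xor (cfg_xor A C) B"
  by auto

lemma cfg_sum_Nil [simp]: "cfg_sum [] = {}"
  and cfg_sum_Cons [simp]: "cfg_sum (a # L) = cfg_xor a (cfg_sum L)"
  by (simp_all add: cfg_sum_def)

lemma cfg_sum_append: "cfg_sum (L @ M) = cfg_xor (cfg_sum L) (cfg_sum M)"
  by (induction L) auto

section \<open>Words in commuting involutions\<close>

locale commuting_action =
  fixes D :: "'a set" and G :: "'s \<Rightarrow> 'a list \<Rightarrow> 'b"
  assumes swap: "p \<in> D \<Longrightarrow> q \<in> D \<Longrightarrow> G x (p # q # L) = G x (q # p # L)"
    and cong: "(\<And>y. G y M = G y N) \<Longrightarrow> G x (a # M) = G x (a # N)"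
begin

lemma move_to_front: "set A \<subseteq> D \<Longrightarrow> p \<in> D \<Longrightarrow> G x (A @ p # B) = G x (p # A @ B)"
proof (induction A arbitrary: x)
  case (Cons a A)
  have "G x (a # A @ p # B) = G x (a # p # A @ B)" using Cons by (intro cong) auto
  also have "\<dots> = G x (p # a # A @ B)" using Cons by (intro swap) auto
  finally show ?case by simp
qed simp

lemma mset_invariant: "mset L = mset L' \<Longrightarrow> set L \<subseteq> D \<Longrightarrow> G x L = G x L'"
proof (induction L arbitrary: L' x)
  case (Cons p L)
  have "set L' = set (p # L)" using Cons.prems(1) by (rule mset_eq_setD[symmetric])
  then have D: "set L' \<subseteq> D" and "p \<in> set L'" using Cons.prems(2) by auto
  then obtain A B where L': "L' = A @ p # B" by (meson split_list)
  have "G x (p # L) = G x (p # A @ B)" using Cons L' by (intro cong) auto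
  also have "\<dots> = G x L'" unfolding L' using D L' by (intro move_to_front[symmetric]) auto
  finally show ?case .
qed simp

end

locale involutive_commuting_action = commuting_action +
  assumes cancel: "p \<in> D \<Longrightarrow> G x (p # p # L) = G x L"
begin

lemma odd_multiplicity_reduction:
  "set L \<subseteq> D \<Longrightarrow> distinct L' \<Longrightarrow> set L' = {p. odd (count (mset L) p)} \<Longrightarrow> G x L = G x L'"
proof (induction L arbitrary: x rule: length_induct)
  case (1 L)
  show ?case
  proof (cases "distinct L")
    case True
    then have "set L' = set L" using 1(4) by (auto simp: distinct_count_atmost_1)
    then show ?thesis
      using True 1 by (intro mset_invariant) (simp_all add: set_eq_iff_mset_eq_distinct)
  next
    case False
    then obtain A p B C where L: "L = A @ p # B @ p # C" using not_distinct_decomp by fastforce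
    have "G x L = G x (p # p # A @ B @ C)" using 1(2) L by (intro mset_invariant) auto
    also have "\<dots> = G x (A @ B @ C)" using 1(2) L by (intro cancel) auto
    also have "\<dots> = G x L'" using 1 L by (intro "1.IH"[rule_format]) auto
    finally show ?thesis .
  qed
qed

end

lemma cfg_sum_odd_multiplicity_reduction:
  "distinct L' \<Longrightarrow> set L' = {p. odd (count (mset L) p)} \<Longrightarrow> cfg_sum (map g L) = cfg_sum (map g L')"
  by (rule involutive_commuting_action.odd_multiplicity_reduction[of UNIV "\<lambda>_ L. cfg_sum (map g L)"])
    (unfold_locales, auto simp: set_eq_iff)

section \<open>Locality of the plaquette phase\<close>

definition occupation :: "('f \<Rightarrow> nat \<Rightarrow> 'e) \<Rightarrow> 'f \<Rightarrow> 'e set \<Rightarrow> nat \<Rightarrow> bool" where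
  "occupation lab p x k \<longleftrightarrow> lab p k \<in> x"

definition sign_factor :: "nat \<Rightarrow> (nat \<Rightarrow> bool) \<Rightarrow> complex" where
  "sign_factor j u = (-1) ^ nat (of_bool (u (prv j)) * (1 - of_bool (u j)))"

definition twist :: "nat \<Rightarrow> (nat \<Rightarrow> bool) \<Rightarrow> complex" where
  "twist k u =
    (let n = (\<lambda>l. of_bool (u l) :: int); e = (\<lambda>l. 1 - n l)
     in \<i> powi (if k = 7 then n 7 * (e 1 * e 2 - n 1 * n 2)
          else if k = 8 then e 8 * (n 2 * e 3 - e 2 * n 3)
          else if k = 9 then n 9 * (n 3 * n 4 - e 3 * e 4)
          else if k = 10 then n 10 * (e 4 * e 5 - n 4 * n 5)
          else if k = 11 then e 11 * (n 5 * e 6 - e 5 * n 6)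
          else n 12 * (n 1 * n 6 - e 1 * e 6)))"

lemma bphase_factorization:
  "bphase lab p x = (\<Prod>j\<in>{1..6}. sign_factor j (occupation lab p x)) * (\<Prod>k\<in>{7..12}. twist k (occupation lab p x))"
proof -
  have bits: "(\<lambda>k. if lab p k \<in> x then 1 else 0 :: int) = (\<lambda>k. of_bool (occupation lab p x k))"
    by (simp add: occupation_def fun_eq_iff)
  have "{7..12::nat} = {7,8,9,10,11,12}" by auto
  then show ?thesis
    unfolding bphase_def Let_def bits
    by (simp add: sign_factor_def twist_def mult_ac split del: if_split)
qed

definition depends_only :: "((nat \<Rightarrow> bool) \<Rightarrow> 'a) \<Rightarrow> nat set \<Rightarrow> bool" where
  "depends_only g K \<longleftrightarrow> (\<forall>u v. (\<forall>k\<in>K. u k = v k) \<longrightarrow> g u = g v)"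

lemma sign_factor_depends_only: "depends_only (sign_factor j) {prv j, j}"
  by (simp add: depends_only_def sign_factor_def)

text \<open>Outgoing edge \<open>k\<close> meets the boundary edges \<open>k - 6\<close> and \<open>k - 5\<close> (cyclically).\<close>

lemma twist_depends_only:
  assumes "k \<in> {7..12}"
  shows "depends_only (twist k) {k, k - 6, if k = 12 then 1 else k - 5}"
proof -
  have "k = 7 \<or> k = 8 \<or> k = 9 \<or> k = 10 \<or> k = 11 \<or> k = 12" using assms by auto
  then show ?thesis by (elim disjE) (simp_all add: depends_only_def twist_def Let_def)
qed

lemma Conn_adjacent: "c \<in> ends e \<Longrightarrow> c \<in> ends f \<Longrightarrow> f \<in> set P \<Longrightarrow> e \<in> Conn ends P"
  unfolding Conn_def by blast

lemma path_cfg_subset: "path_cfg P \<subseteq> set P"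
  by (auto simp: path_cfg_def) (metis count_list_0_iff even_zero)

text \<open>Either the path avoids the edges of \<open>K\<close>, and both ratios are 1, or it meets one of them;
  then all edges at the common corner lie in \<open>Conn ends P\<close>, which \<open>w\<close> avoids.\<close>

lemma factor_ratio_local:
  fixes g :: "(nat \<Rightarrow> bool) \<Rightarrow> complex"
  assumes g: "depends_only g K" "\<And>u. g u \<noteq> 0"
    and corner: "\<forall>k\<in>K. c \<in> ends (lab p k)" and w: "w \<inter> Conn ends P = {}"
  shows "g (occupation lab p (cfg_xor (cfg_xor z w) (path_cfg P))) / g (occupation lab p (cfg_xor z w))
       = g (occupation lab p (cfg_xor z (path_cfg P))) / g (occupation lab p z)"
proof (cases "\<exists>k\<in>K. lab p k \<in> path_cfg P")
  case True
  then have "\<forall>k\<in>K. lab p k \<in> Conn ends P"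
    using corner path_cfg_subset Conn_adjacent by (metis subsetD)
  then have "\<forall>k\<in>K. lab p k \<notin> w" using w by blast
  then have "g (occupation lab p (cfg_xor (cfg_xor z w) (path_cfg P))) = g (occupation lab p (cfg_xor z (path_cfg P)))"
    and "g (occupation lab p (cfg_xor z w)) = g (occupation lab p z)"
    using g(1) unfolding depends_only_def occupation_def by auto
  then show ?thesis by simp
next
  case False
  then have "g (occupation lab p (cfg_xor y (path_cfg P))) = g (occupation lab p y)" for y
    using g(1) unfolding depends_only_def occupation_def by auto
  then show ?thesis using g(2) by simp
qed

definition corner_map ::
  "('e \<Rightarrow> 'v set) \<Rightarrow> 'f set \<Rightarrow> ('f \<Rightarrow> nat \<Rightarrow> 'e) \<Rightarrow> ('f \<Rightarrow> nat \<Rightarrow> 'v) \<Rightarrow> bool" where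
  "corner_map ends Pl lab crn \<longleftrightarrow>
     (\<forall>p\<in>Pl. \<forall>k\<in>{1..6}. ends (lab p k) = {crn p (prv k), crn p k} \<and> crn p k \<in> ends (lab p (k + 6)))"

lemma honeycomb_surface_corner_map:
  "honeycomb_surface ends Pl lab \<Longrightarrow> \<exists>crn. corner_map ends Pl lab crn"
  unfolding honeycomb_surface_def corner_map_def by blast

lemma bphase_ratio_local:
  assumes "corner_map ends Pl lab crn" and "p \<in> Pl"
    and w: "w \<inter> Conn ends P = {}"
  shows "bphase lab p (cfg_xor (cfg_xor z w) (path_cfg P)) / bphase lab p (cfg_xor z w)
       = bphase lab p (cfg_xor z (path_cfg P)) / bphase lab p z"
proof -
  have corners: "\<forall>k\<in>{1..6}. ends (lab p k) = {crn p (prv k), crn p k} \<and> crn p k \<in> ends (lab p (k + 6))"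
    using assms(1,2) unfolding corner_map_def by blast
  have prv_range: "prv j \<in> {1..6}" if "j \<in> {1..6}" for j using that by (auto simp: prv_def)
  have sign: "sign_factor j (occupation lab p (cfg_xor (cfg_xor z w) (path_cfg P))) / sign_factor j (occupation lab p (cfg_xor z w))
       = sign_factor j (occupation lab p (cfg_xor z (path_cfg P))) / sign_factor j (occupation lab p z)"
    if "j \<in> {1..6}" for j
    using corners that prv_range[OF that]
    by (intro factor_ratio_local[OF sign_factor_depends_only _ _ w, where c = "crn p (prv j)"])
       (auto simp: sign_factor_def)
  have twist: "twist k (occupation lab p (cfg_xor (cfg_xor z w) (path_cfg P))) / twist k (occupation lab p (cfg_xor z w))
       = twist k (occupation lab p (cfg_xor z (path_cfg P))) / twist k (occupation lab p z)"
    if k: "k \<in> {7..12}" for k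
  proof (rule factor_ratio_local[OF twist_depends_only[OF k] _ _ w, where c = "crn p (k - 6)"])
    define j' where "j' = (if k = 12 then 1 else k - 5)"
    have "k - 6 \<in> {1..6}" "j' \<in> {1..6}" "prv j' = k - 6" "k - 6 + 6 = k"
      using k by (auto simp: j'_def prv_def)
    then show "\<forall>l\<in>{k, k - 6, if k = 12 then 1 else k - 5}. crn p (k - 6) \<in> ends (lab p l)"
      using corners unfolding j'_def[symmetric] by (metis insert_iff singletonD)
  qed (simp add: twist_def)
  show ?thesis
    unfolding bphase_factorization times_divide_times_eq[symmetric] prod_dividef[symmetric]
    using sign twist by simp
qed

section \<open>The phase function theta\<close>

text \<open>The phase acquired by \<open>|x\<rangle>\<close> under \<open>B\<close> of \<open>L ! 0\<close>, \<open>L ! 1\<close>, \<dots> applied in this order.\<close>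

definition bphase_seq :: "('f \<Rightarrow> nat \<Rightarrow> 'e) \<Rightarrow> 'e set \<Rightarrow> 'f list \<Rightarrow> complex" where
  "bphase_seq lab x L =
     (\<Prod>k<length L. bphase lab (L ! k) (cfg_xor x (cfg_sum (map (plaq_cfg lab) (take k L)))))"

lemma bphase_seq_Nil [simp]: "bphase_seq lab x [] = 1"
  by (simp add: bphase_seq_def)

lemma bphase_seq_Cons:
  "bphase_seq lab x (p # L) = bphase lab p x * bphase_seq lab (cfg_xor x (plaq_cfg lab p)) L"
  by (simp add: bphase_seq_def prod.lessThan_Suc_shift cfg_xor_assoc del: prod.lessThan_Suc)

lemma bphase_seq_append:
  "bphase_seq lab x (M @ L) =
     bphase_seq lab x M * bphase_seq lab (cfg_xor x (cfg_sum (map (plaq_cfg lab) M))) L"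
  by (induction M arbitrary: x) (simp_all add: bphase_seq_Cons cfg_xor_assoc)

lemma norm_bphase: "cmod (bphase lab p x) = 1"
  by (simp add: bphase_def Let_def norm_mult prod_norm[symmetric] norm_power norm_power_int)

lemma norm_bphase_seq: "cmod (bphase_seq lab x L) = 1"
  by (simp add: bphase_seq_def prod_norm[symmetric] norm_bphase)

lemma bphase_seq_action:
  assumes "plaquettes_commute_square Pl lab"
  shows "involutive_commuting_action Pl (bphase_seq lab)"
proof
  fix x p q L assume "p \<in> Pl" "q \<in> Pl"
  with assms have "bphase lab p (cfg_xor x (plaq_cfg lab q)) * bphase lab q x =
      bphase lab q (cfg_xor x (plaq_cfg lab p)) * bphase lab p x"
    unfolding plaquettes_commute_square_def by blast
  then show "bphase_seq lab x (p # q # L) = bphase_seq lab x (q # p # L)"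
    by (simp add: bphase_seq_Cons cfg_xor_right_commute[of x "plaq_cfg lab p"] mult_ac)
next
  fix x a M N assume "\<And>y. bphase_seq lab y M = bphase_seq lab y N"
  then show "bphase_seq lab x (a # M) = bphase_seq lab x (a # N)"
    by (simp add: bphase_seq_Cons)
next
  fix x p L assume "p \<in> Pl"
  with assms have "bphase lab p (cfg_xor x (plaq_cfg lab p)) * bphase lab p x = 1"
    unfolding plaquettes_commute_square_def by blast
  then show "bphase_seq lab x (p # p # L) = bphase_seq lab x L"
    by (simp add: bphase_seq_Cons mult_ac)
qed

lemma theta_eq_bphase_seq:
  "theta lab P x L = bphase_seq lab (cfg_xor x (path_cfg P)) L / bphase_seq lab x L"
  by (simp add: theta_def bphase_seq_def prod_dividef)

lemma theta_append:
  "theta lab P x (M @ L) = theta lab P x M * theta lab P (cfg_xor x (cfg_sum (map (plaq_cfg lab) M))) L"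
  by (simp add: theta_eq_bphase_seq bphase_seq_append times_divide_times_eq
      cfg_xor_right_commute[of x "path_cfg P"])

lemma theta_path_shift: "theta lab P (cfg_xor x (path_cfg P)) L = cnj (theta lab P x L)"
  by (simp add: theta_eq_bphase_seq divide_conv_cnj norm_bphase_seq)

lemma theta_local:
  assumes "corner_map ends Pl lab crn" and "set L \<subseteq> Pl" and "w \<inter> Conn ends P = {}"
  shows "theta lab P (cfg_xor y w) L = theta lab P y L"
  unfolding theta_def
proof (rule prod.cong[OF refl])
  fix k assume "k \<in> {..<length L}"
  then have p: "L ! k \<in> Pl" using assms(2) by auto
  let ?A = "path_cfg P" and ?S = "cfg_sum (map (plaq_cfg lab) (take k L))"
  have "cfg_xor (cfg_xor (cfg_xor y w) ?A) ?S = cfg_xor (cfg_xor (cfg_xor y ?S) w) ?A"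
    and "cfg_xor (cfg_xor y w) ?S = cfg_xor (cfg_xor y ?S) w"
    and "cfg_xor (cfg_xor y ?A) ?S = cfg_xor (cfg_xor y ?S) ?A"
    by auto
  with bphase_ratio_local[OF assms(1) p assms(3), of "cfg_xor y ?S"]
  show "bphase lab (L ! k) (cfg_xor (cfg_xor (cfg_xor y w) ?A) ?S) / bphase lab (L ! k) (cfg_xor (cfg_xor y w) ?S) =
      bphase lab (L ! k) (cfg_xor (cfg_xor y ?A) ?S) / bphase lab (L ! k) (cfg_xor y ?S)"
    by simp
qed

lemma restr_sum_subset: "restr_sum ends lab P L \<subseteq> Conn ends P"
  by (induction L) (auto simp: restr_sum_def)

lemma restr_sum_iff:
  "e \<in> Conn ends P \<Longrightarrow> e \<in> restr_sum ends lab P L \<longleftrightarrow> e \<in> cfg_sum (map (plaq_cfg lab) L)"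
  by (induction L) (auto simp: restr_sum_def)

text \<open>Restricting the plaquette configurations to \<open>Conn ends P\<close> changes the configuration only
  outside \<open>Conn ends P\<close>, where theta does not look.\<close>

lemma theta_append_restr_sum:
  assumes "corner_map ends Pl lab crn" and "set ps \<subseteq> Pl"
  shows "theta lab P r (qs @ ps) = theta lab P r qs * theta lab P (cfg_xor r (restr_sum ends lab P qs)) ps"
proof -
  define w where "w = cfg_xor (restr_sum ends lab P qs) (cfg_sum (map (plaq_cfg lab) qs))"
  have "w \<inter> Conn ends P = {}" using restr_sum_iff[of _ ends P lab qs] by (auto simp: w_def)
  then have "theta lab P (cfg_xor (cfg_xor r (restr_sum ends lab P qs)) w) ps =
      theta lab P (cfg_xor r (restr_sum ends lab P qs)) ps"
    by (rule theta_local[OF assms])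
  moreover have "cfg_xor (cfg_xor r (restr_sum ends lab P qs)) w = cfg_xor r (cfg_sum (map (plaq_cfg lab) qs))"
    by (auto simp: w_def)
  ultimately show ?thesis
    by (simp add: theta_append)
qed

text \<open>Plaquettes occurring in both lists cancel, as the \<open>B\<close>'s commute and square to 1.\<close>

lemma merge_plaquette_lists:
  assumes "plaquettes_commute_square Pl lab" and "B \<subseteq> Pl"
    and "distinct qs" "set qs \<subseteq> B" "distinct ps" "set ps \<subseteq> B"
  obtains ts where "distinct ts" "set ts \<subseteq> B"
    "restr_sum ends lab P ts = cfg_xor (restr_sum ends lab P qs) (restr_sum ends lab P ps)"
    "theta lab P x ts = theta lab P x (qs @ ps)"
proof -
  obtain ts where ts: "distinct ts" "set ts = (set qs - set ps) \<union> (set ps - set qs)"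
    using finite_distinct_list[of "(set qs - set ps) \<union> (set ps - set qs)"] by auto
  have odd: "set ts = {p. odd (count (mset (qs @ ps)) p)}"
    using ts(2) assms(3,5) by (auto simp: distinct_count_atmost_1)
  have "set (qs @ ps) \<subseteq> Pl" using assms by auto
  note reduce = involutive_commuting_action.odd_multiplicity_reduction[OF bphase_seq_action[OF assms(1)] this ts(1) odd]
  show ?thesis
  proof
    show "set ts \<subseteq> B" using ts(2) assms(4,6) by auto
    show "restr_sum ends lab P ts = cfg_xor (restr_sum ends lab P qs) (restr_sum ends lab P ps)"
      using cfg_sum_odd_multiplicity_reduction[OF ts(1) odd, of "\<lambda>p. plaq_cfg lab p \<inter> Conn ends P"]
      by (simp add: restr_sum_def cfg_sum_append)
    show "theta lab P x ts = theta lab P x (qs @ ps)"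
      by (simp add: theta_eq_bphase_seq reduce)
  qed (rule ts(1))
qed

section \<open>Algorithm 1\<close>

lemma algorithm1_theta:
  assumes "algorithm1 ends Pl lab P rep F" and "y \<subseteq> Conn ends P"
    and "distinct ts" and "set ts \<subseteq> BP ends Pl lab P"
  shows "F (cfg_xor (rep y) (restr_sum ends lab P ts)) = theta lab P (rep y) ts * F (rep y)"
  using assms unfolding algorithm1_def by blast

lemma algorithm1_decomposition:
  assumes "algorithm1 ends Pl lab P rep F" and "x \<subseteq> Conn ends P"
  obtains ps where "distinct ps" "set ps \<subseteq> BP ends Pl lab P"
    "rep x = cfg_xor x (restr_sum ends lab P ps)"
    "F x = theta lab P (rep x) ps * F (rep x)"
proof -
  have "rep x \<in> config_class ends Pl lab P x"
    using assms unfolding algorithm1_def by blast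
  then obtain ps where ps: "distinct ps" "set ps \<subseteq> BP ends Pl lab P"
    "rep x = cfg_xor x (restr_sum ends lab P ps)"
    unfolding config_class_def by blast
  moreover have "F x = theta lab P (rep x) ps * F (rep x)"
    using algorithm1_theta[OF assms ps(1,2)] by (simp add: ps(3))
  ultimately show ?thesis using that by blast
qed

lemma algorithm1_path_shift:
  assumes crn: "corner_map ends Pl lab crn" and "plaquettes_commute_square Pl lab"
    and alg: "algorithm1 ends Pl lab P rep F" and x: "x \<subseteq> Conn ends P"
    and ps: "distinct ps" "set ps \<subseteq> BP ends Pl lab P" "rep x = cfg_xor x (restr_sum ends lab P ps)"
  shows "F (cfg_xor x (path_cfg P)) = F (cfg_xor (rep x) (path_cfg P)) * cnj (theta lab P (rep x) ps)"
proof -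
  let ?A = "path_cfg P" and ?R = "restr_sum ends lab P" and ?B = "BP ends Pl lab P"
  have B: "?B \<subseteq> Pl" by (auto simp: BP_def)
  define s where "s = cfg_xor (rep x) ?A"
  have s: "s \<subseteq> Conn ends P"
    using x restr_sum_subset[of ends lab P ps] path_cfg_subset[of P]
    by (auto simp: s_def ps(3) Conn_def)
  obtain qs where qs: "distinct qs" "set qs \<subseteq> ?B" "rep s = cfg_xor s (?R qs)"
    "F s = theta lab P (rep s) qs * F (rep s)"
    using algorithm1_decomposition[OF alg s] by blast
  obtain ts where ts: "distinct ts" "set ts \<subseteq> ?B" "?R ts = cfg_xor (?R qs) (?R ps)"
    "theta lab P (rep s) ts = theta lab P (rep s) (qs @ ps)"
    using merge_plaquette_lists[OF assms(2) B qs(1,2) ps(1,2)] by blast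
  have "cfg_xor x ?A = cfg_xor (rep s) (?R ts)"
    unfolding qs(3) ts(3) by (auto simp: s_def ps(3))
  then have "F (cfg_xor x ?A) = theta lab P (rep s) ts * F (rep s)"
    using algorithm1_theta[OF alg s ts(1,2)] by simp
  also have "\<dots> = theta lab P (rep s) qs * theta lab P s ps * F (rep s)"
    using ts(4) theta_append_restr_sum[OF crn, where r = "rep s" and qs = qs and ps = ps] ps(2) B
    by (auto simp: qs(3))
  also have "\<dots> = F s * cnj (theta lab P (rep x) ps)"
    using qs(4) by (simp add: s_def theta_path_shift)
  finally show ?thesis by (simp add: s_def)
qed

theorem lemma8:
  fixes ends :: "'e \<Rightarrow> 'v set" and Pl :: "'f set" and lab :: "'f \<Rightarrow> nat \<Rightarrow> 'e"
    and P :: "'e list" and rep :: "'e set \<Rightarrow> 'e set" and F :: "'e set \<Rightarrow> complex"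
  assumes "honeycomb_surface ends Pl lab"
    and "plaquettes_commute_square Pl lab"
    and "is_path ends P"
    and "algorithm1 ends Pl lab P rep F"
    and "\<forall>x. x \<subseteq> Conn ends P \<longrightarrow> F (rep x) = cnj (F (cfg_xor (rep x) (path_cfg P)))"
  shows "\<forall>x. x \<subseteq> Conn ends P \<longrightarrow> F (cfg_xor x (path_cfg P)) = cnj (F x)"
proof (intro allI impI)
  fix x assume x: "x \<subseteq> Conn ends P"
  obtain crn where crn: "corner_map ends Pl lab crn"
    using honeycomb_surface_corner_map[OF assms(1)] by blast
  obtain ps where ps: "distinct ps" "set ps \<subseteq> BP ends Pl lab P"
    "rep x = cfg_xor x (restr_sum ends lab P ps)" "F x = theta lab P (rep x) ps * F (rep x)"
    using algorithm1_decomposition[OF assms(4) x] by blast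
  have "F (cfg_xor x (path_cfg P)) = F (cfg_xor (rep x) (path_cfg P)) * cnj (theta lab P (rep x) ps)"
    by (rule algorithm1_path_shift[OF crn assms(2,4) x ps(1-3)])
  also have "\<dots> = cnj (F x)"
    using assms(5) x ps(4) by simp
  finally show "F (cfg_xor x (path_cfg P)) = cnj (F x)" .
qed

end
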